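(* Let $(E,A)$ satisfy the standing assumptions below, set $p:=p_{\mathrm{res}}^{(E,A)}+1$ and let $(S_l(t))_{t\geq 0}$ and $(S_r(t))_{t\geq 0}$ be the $p$-times integrated semigroups of $(E,A)$. Let $x\in X_{\operatorname{ran}}$. If $S_r(t)x=0$ for all $t\geq 0$, then $x=0$.
   Context: Standing assumptions: $X$, $Z$ complex Banach spaces; $E\in L(X,Z)$; $A\colon\mathrm{dom}(A)\subseteq X\to Z$ closed and densely defined; $(E,A)$ has a complex resolvent index $p_{\mathrm{res}}^{(E,A)}$, i.e.~the smallest $n\in\mathbb N_0$ with $\mathbb C_{\operatorname{Re}>\omega}\subseteq\rho(E,A)$ and $\Vert(\lambda E-A)^{-1}\Vert\le C|\lambda|^{n-1}$ on $\mathbb C_{\operatorname{Re}>\omega}$ for some $\omega\in\mathbb R$, $C>0$; with $R_r(\lambda)=(\lambda E-A)^{-1}E$ and $X_{\operatorname{ran}}\coloneqq\overline{\operatorname{ran}R_r(\lambda)^p}$, additionally $X_{\operatorname{ran}}\cap\ker E=\{0\}$. $(S_r(t))_{t\ge0}$ is the $p$-times integrated semigroup on $X_{\operatorname{ran}}$: an exponentially bounded family with $R_r(\lambda)x=\lambda^p\int_0^\infty \mathrm e^{-\lambda t}S_r(t)x\,\mathrm dt$ for $x\in X_{\operatorname{ran}}$ and large $\operatorname{Re}\lambda$ (and $S_l$ the analogous family on $\overline{\operatorname{ran}(E(\lambda E-A)^{-1})^p}$). *)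

theory Defs
  imports "HOL-Analysis.Analysis"
begin

text \<open>Complex Banach spaces are modelled as real Banach spaces (class banach)
  together with a complex scalar multiplication compatible with the real one
  and with the norm.\<close>

definition complex_scaling :: "(complex \<Rightarrow> 'a::real_normed_vector \<Rightarrow> 'a) \<Rightarrow> bool" where
  "complex_scaling sm \<longleftrightarrow>
     (\<forall>r x. sm (complex_of_real r) x = scaleR r x) \<and>
     (\<forall>a x y. sm a (x + y) = sm a x + sm a y) \<and>
     (\<forall>a b x. sm (a + b) x = sm a x + sm b x) \<and>
     (\<forall>a b x. sm (a * b) x = sm a (sm b x)) \<and>
     (\<forall>a x. norm (sm a x) = cmod a * norm x)"

definition bounded_clinear_op ::
  "(complex \<Rightarrow> 'x::real_normed_vector \<Rightarrow> 'x) \<Rightarrow> (complex \<Rightarrow> 'z::real_normed_vector \<Rightarrow> 'z)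
   \<Rightarrow> ('x \<Rightarrow> 'z) \<Rightarrow> bool" where
  "bounded_clinear_op smX smZ E \<longleftrightarrow> bounded_linear E \<and> (\<forall>c x. E (smX c x) = smZ c (E x))"

definition closed_dense_op ::
  "(complex \<Rightarrow> 'x::real_normed_vector \<Rightarrow> 'x) \<Rightarrow> (complex \<Rightarrow> 'z::real_normed_vector \<Rightarrow> 'z)
   \<Rightarrow> 'x set \<Rightarrow> ('x \<Rightarrow> 'z) \<Rightarrow> bool" where
  "closed_dense_op smX smZ D A \<longleftrightarrow>
     0 \<in> D \<and> (\<forall>x\<in>D. \<forall>y\<in>D. x + y \<in> D) \<and> (\<forall>c. \<forall>x\<in>D. smX c x \<in> D) \<and>
     (\<forall>x\<in>D. \<forall>y\<in>D. A (x + y) = A x + A y) \<and> (\<forall>c. \<forall>x\<in>D. A (smX c x) = smZ c (A x)) \<and>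
     closed {(x, A x) | x. x \<in> D} \<and>
     closure D = UNIV"

definition pencil :: "(complex \<Rightarrow> 'z \<Rightarrow> 'z) \<Rightarrow> ('x \<Rightarrow> 'z) \<Rightarrow> ('x \<Rightarrow> 'z::ab_group_add)
   \<Rightarrow> complex \<Rightarrow> 'x \<Rightarrow> 'z" where
  "pencil smZ E A lam x = smZ lam (E x) - A x"

definition is_res_inverse ::
  "(complex \<Rightarrow> 'z \<Rightarrow> 'z) \<Rightarrow> ('x::real_normed_vector \<Rightarrow> 'z::real_normed_vector) \<Rightarrow> 'x set
   \<Rightarrow> ('x \<Rightarrow> 'z) \<Rightarrow> complex \<Rightarrow> ('z \<Rightarrow> 'x) \<Rightarrow> bool" where
  "is_res_inverse smZ E D A lam R \<longleftrightarrow>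
     bounded_linear R \<and> (\<forall>z. R z \<in> D \<and> pencil smZ E A lam (R z) = z) \<and>
     (\<forall>x\<in>D. R (pencil smZ E A lam x) = x)"

definition in_resolvent_set ::
  "(complex \<Rightarrow> 'z \<Rightarrow> 'z) \<Rightarrow> ('x::real_normed_vector \<Rightarrow> 'z::real_normed_vector) \<Rightarrow> 'x set
   \<Rightarrow> ('x \<Rightarrow> 'z) \<Rightarrow> complex \<Rightarrow> bool" where
  "in_resolvent_set smZ E D A lam \<longleftrightarrow> (\<exists>R. is_res_inverse smZ E D A lam R)"

definition resolvent ::
  "(complex \<Rightarrow> 'z \<Rightarrow> 'z) \<Rightarrow> ('x::real_normed_vector \<Rightarrow> 'z::real_normed_vector) \<Rightarrow> 'x set
   \<Rightarrow> ('x \<Rightarrow> 'z) \<Rightarrow> complex \<Rightarrow> 'z \<Rightarrow> 'x" where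
  "resolvent smZ E D A lam = (THE R. is_res_inverse smZ E D A lam R)"

definition resolvent_bound ::
  "(complex \<Rightarrow> 'z \<Rightarrow> 'z) \<Rightarrow> ('x::real_normed_vector \<Rightarrow> 'z::real_normed_vector) \<Rightarrow> 'x set
   \<Rightarrow> ('x \<Rightarrow> 'z) \<Rightarrow> nat \<Rightarrow> bool" where
  "resolvent_bound smZ E D A n \<longleftrightarrow>
     (\<exists>\<omega>::real. \<exists>C::real. C > 0 \<and>
        (\<forall>lam. Re lam > \<omega> \<longrightarrow> in_resolvent_set smZ E D A lam \<and>
           (\<forall>z. norm (resolvent smZ E D A lam z) \<le> C * cmod lam powr (real n - 1) * norm z)))"

definition resolvent_index ::
  "(complex \<Rightarrow> 'z \<Rightarrow> 'z) \<Rightarrow> ('x::real_normed_vector \<Rightarrow> 'z::real_normed_vector) \<Rightarrow> 'x set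
   \<Rightarrow> ('x \<Rightarrow> 'z) \<Rightarrow> nat" where
  "resolvent_index smZ E D A = (LEAST n. resolvent_bound smZ E D A n)"

definition right_resolvent ::
  "(complex \<Rightarrow> 'z \<Rightarrow> 'z) \<Rightarrow> ('x::real_normed_vector \<Rightarrow> 'z::real_normed_vector) \<Rightarrow> 'x set
   \<Rightarrow> ('x \<Rightarrow> 'z) \<Rightarrow> complex \<Rightarrow> 'x \<Rightarrow> 'x" where
  "right_resolvent smZ E D A lam = resolvent smZ E D A lam \<circ> E"

definition X_ran ::
  "(complex \<Rightarrow> 'z \<Rightarrow> 'z) \<Rightarrow> ('x::real_normed_vector \<Rightarrow> 'z::real_normed_vector) \<Rightarrow> 'x set
   \<Rightarrow> ('x \<Rightarrow> 'z) \<Rightarrow> complex \<Rightarrow> nat \<Rightarrow> 'x set" where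
  "X_ran smZ E D A lam p = closure (range (right_resolvent smZ E D A lam ^^ p))"

definition integrated_semigroup ::
  "(complex \<Rightarrow> 'x \<Rightarrow> 'x) \<Rightarrow> (complex \<Rightarrow> 'x \<Rightarrow> 'x::real_normed_vector) \<Rightarrow> 'x set \<Rightarrow> nat
   \<Rightarrow> (real \<Rightarrow> 'x \<Rightarrow> 'x) \<Rightarrow> bool" where
  "integrated_semigroup smX Rr Y p S \<longleftrightarrow>
     (\<exists>M w::real. \<forall>t\<ge>0. \<forall>x\<in>Y. norm (S t x) \<le> M * exp (w * t) * norm x) \<and>
     (\<exists>\<omega>::real. \<forall>lam. Re lam > \<omega> \<longrightarrow>
        (\<forall>x\<in>Y. \<exists>y. ((\<lambda>t. smX (exp (- (lam * complex_of_real t))) (S t x)) has_integral y) {0..}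
                   \<and> Rr lam x = smX (lam ^ p) y))"

end

theory Submission
  imports Defs
begin

text \<open>If \<open>S(t)x = 0\<close> for all \<open>t \<ge> 0\<close>, the Laplace transform of \<open>S(\<cdot>)x\<close> vanishes, so
  \<open>R\<^sub>r(\<lambda>)x = (\<lambda>E - A)\<^sup>-\<^sup>1 E x = 0\<close> for every large real \<open>\<lambda>\<close>. Since \<open>(\<lambda>E - A)\<^sup>-\<^sup>1\<close> is injective,
  \<open>Ex = 0\<close>, and \<open>X\<^sub>r\<^sub>a\<^sub>n \<inter> ker E = {0}\<close> gives \<open>x = 0\<close>. Neither the value of \<open>p\<close> nor the
  closedness of \<open>A\<close> or the boundedness of \<open>E\<close> is needed.\<close>

lemma complex_scaling_zero_right:
  assumes "complex_scaling sm"
  shows "sm c 0 = 0"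
proof -
  have "sm c (0 + 0) = sm c 0 + sm c 0"
    using assms unfolding complex_scaling_def by blast
  then show ?thesis by simp
qed

lemma is_res_inverse_unique:
  assumes "is_res_inverse smZ E D A lam R" and "is_res_inverse smZ E D A lam R'"
  shows "R' = R"
proof
  fix z
  have "R' z \<in> D" and pencil_R': "pencil smZ E A lam (R' z) = z"
    using assms(2) unfolding is_res_inverse_def by auto
  then have "R (pencil smZ E A lam (R' z)) = R' z"
    using assms(1) unfolding is_res_inverse_def by auto
  then show "R' z = R z" by (simp add: pencil_R')
qed

lemma resolvent_eqI:
  assumes "is_res_inverse smZ E D A lam R"
  shows "resolvent smZ E D A lam = R"
  unfolding resolvent_def using assms is_res_inverse_unique[OF assms] by (rule the_equality)

lemma resolvent_eq_zero_iff:
  assumes "in_resolvent_set smZ E D A lam"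
  shows "resolvent smZ E D A lam z = 0 \<longleftrightarrow> z = 0"
proof -
  obtain R where R: "is_res_inverse smZ E D A lam R"
    using assms unfolding in_resolvent_set_def by blast
  then have "bounded_linear R" and "\<And>z. pencil smZ E A lam (R z) = z"
    unfolding is_res_inverse_def by auto
  then have "R z = 0 \<longleftrightarrow> z = 0"
    by (metis bounded_linear.linear linear_0)
  then show ?thesis using resolvent_eqI[OF R] by simp
qed

lemma resolvent_bound_in_resolvent_set:
  assumes "resolvent_bound smZ E D A n"
  shows "\<exists>\<omega>. \<forall>lam. Re lam > \<omega> \<longrightarrow> in_resolvent_set smZ E D A lam"
  using assms unfolding resolvent_bound_def by blast

lemma integrated_semigroup_vanishing_orbit:
  assumes "complex_scaling smX" and "integrated_semigroup smX Rr Y p S"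
    and "x \<in> Y" and "\<forall>t\<ge>0. S t x = 0"
  shows "\<exists>\<omega>. \<forall>lam. Re lam > \<omega> \<longrightarrow> Rr lam x = 0"
proof -
  obtain \<omega> where laplace: "\<And>lam. Re lam > \<omega> \<Longrightarrow>
      \<exists>y. ((\<lambda>t. smX (exp (- (lam * complex_of_real t))) (S t x)) has_integral y) {0..}
          \<and> Rr lam x = smX (lam ^ p) y"
    using assms(2,3) unfolding integrated_semigroup_def by blast
  have "Rr lam x = 0" if large: "Re lam > \<omega>" for lam
  proof -
    obtain y where y: "((\<lambda>t. smX (exp (- (lam * complex_of_real t))) (S t x)) has_integral y) {0..}"
      and Rr: "Rr lam x = smX (lam ^ p) y"
      using laplace[OF large] by blast
    have "((\<lambda>t. 0) has_integral y) {0..}"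
      using y assms(4) complex_scaling_zero_right[OF assms(1)]
        has_integral_cong[of "{0..}" "\<lambda>t. smX (exp (- (lam * complex_of_real t))) (S t x)" "\<lambda>t. 0"]
      by auto
    then have "y = 0" using has_integral_0 has_integral_unique by blast
    then show ?thesis using Rr complex_scaling_zero_right[OF assms(1)] by simp
  qed
  then show ?thesis by blast
qed

theorem lemma4p2:
  fixes smX :: "complex \<Rightarrow> 'x::banach \<Rightarrow> 'x"
    and smZ :: "complex \<Rightarrow> 'z::banach \<Rightarrow> 'z"
    and E :: "'x \<Rightarrow> 'z" and D :: "'x set" and A :: "'x \<Rightarrow> 'z"
    and lam0 :: complex and p :: nat
    and S :: "real \<Rightarrow> 'x \<Rightarrow> 'x" and x :: 'x
  assumes "complex_scaling smX" and "complex_scaling smZ"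
    and "bounded_clinear_op smX smZ E"
    and "closed_dense_op smX smZ D A"
    and "\<exists>n. resolvent_bound smZ E D A n"
    and "p = resolvent_index smZ E D A + 1"
    and "in_resolvent_set smZ E D A lam0"
    and "X_ran smZ E D A lam0 p \<inter> {v. E v = 0} = {0}"
    and "integrated_semigroup smX (right_resolvent smZ E D A) (X_ran smZ E D A lam0 p) p S"
    and "x \<in> X_ran smZ E D A lam0 p"
    and "\<forall>t\<ge>0. S t x = 0"
  shows "x = 0"
proof -
  obtain \<omega>\<^sub>\<rho> where resolvent_set: "\<And>lam. Re lam > \<omega>\<^sub>\<rho> \<Longrightarrow> in_resolvent_set smZ E D A lam"
    using assms(5) resolvent_bound_in_resolvent_set by blast
  obtain \<omega>\<^sub>S where orbit: "\<And>lam. Re lam > \<omega>\<^sub>S \<Longrightarrow> right_resolvent smZ E D A lam x = 0"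
    using integrated_semigroup_vanishing_orbit[OF assms(1,9-11)] by blast
  define lam where "lam = complex_of_real (max \<omega>\<^sub>\<rho> \<omega>\<^sub>S + 1)"
  have "Re lam > \<omega>\<^sub>\<rho>" and "Re lam > \<omega>\<^sub>S" unfolding lam_def by auto
  then have "resolvent smZ E D A lam (E x) = 0"
    using orbit unfolding right_resolvent_def by simp
  then have "E x = 0" using resolvent_eq_zero_iff resolvent_set \<open>Re lam > \<omega>\<^sub>\<rho>\<close> by blast
  then show ?thesis using assms(8,10) by blast
qed

end
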